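(* Let $V$ be a JB-algebra and let $a,b$ be projections in $V$ with $\{aba\}=\lambda a$ and $\{bab\}=\mu b$ for some real numbers $\lambda,\mu$. Then $0\le\lambda=\mu\le1$. Moreover $\lambda=0$ if and only if $ab=0$, and $\lambda=1$ if and only if $a=b$.
   Context: Products are the Jordan product of $V$. A projection is an idempotent. The triple product is $\{xyz\}=(xy)z-(zx)y+(yz)x$, so that $\{aba\}=2a(ab)-a^2b$. *)

theory Defs
  imports "HOL-Analysis.Analysis"
begin

definition jb_algebra :: "('a::banach \<Rightarrow> 'a \<Rightarrow> 'a) \<Rightarrow> bool" where
  "jb_algebra m \<longleftrightarrow>
     (\<forall>x y z. m (x + y) z = m x z + m y z) \<and>
     (\<forall>(r::real) x y. m (r *\<^sub>R x) y = r *\<^sub>R m x y) \<and>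
     (\<forall>x y. m x y = m y x) \<and>
     (\<forall>x y. m (m (m x x) y) x = m (m x x) (m y x)) \<and>
     (\<forall>x y. norm (m x y) \<le> norm x * norm y) \<and>
     (\<forall>x. norm (m x x) = (norm x)\<^sup>2) \<and>
     (\<forall>x y. norm (m x x) \<le> norm (m x x + m y y))"

definition jb_projection :: "('a \<Rightarrow> 'a \<Rightarrow> 'a) \<Rightarrow> 'a \<Rightarrow> bool" where
  "jb_projection m p \<longleftrightarrow> m p p = p"

definition jb_triple :: "('a::ab_group_add \<Rightarrow> 'a \<Rightarrow> 'a) \<Rightarrow> 'a \<Rightarrow> 'a \<Rightarrow> 'a \<Rightarrow> 'a" where
  "jb_triple m x y z = m (m x y) z - m (m z x) y + m (m y z) x"

end

theory Submission
  imports Defs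
begin

(* Write c = ab.  The hypotheses say exactly that 2 ac = c + lambda a and 2 bc = c + mu b.
   Inserting these into the linearized Jordan identity, once for (a, b) and once for (b, a),
   gives two expressions for c^2; comparing them forces lambda = mu, and then
   c^2 = (lambda/4) (a + b)^2.  Likewise (a - b)^2 = a + b - 2c satisfies
   ((a - b)^2)^2 = (1 - lambda) (a - b)^2.  A JB-algebra is formally real, so x^2 = t y^2 with
   x <> 0 forces t >= 0.  This gives lambda >= 0 and 1 - lambda >= 0, with equality exactly
   when c = 0, respectively (a - b)^2 = 0, i.e. a = b. *)

lemma scaleR_half_add_half: "(1/2) *\<^sub>R x + (1/2) *\<^sub>R x = (x :: 'a::real_vector)"
  by (simp flip: scaleR_add_left)

locale jordan_algebra =
  fixes mult :: "'a::real_vector \<Rightarrow> 'a \<Rightarrow> 'a"  (infixl "\<cdot>" 70)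
  assumes bilinear: "bilinear (\<cdot>)"
    and commute: "x \<cdot> y = y \<cdot> x"
    and jordan_identity: "(x \<cdot> x) \<cdot> y \<cdot> x = (x \<cdot> x) \<cdot> (y \<cdot> x)"
begin

lemmas bilinear_simps =
  bilinear_ladd[OF bilinear] bilinear_radd[OF bilinear]
  bilinear_lsub[OF bilinear] bilinear_rsub[OF bilinear]
  bilinear_lmul[OF bilinear] bilinear_rmul[OF bilinear]
  bilinear_lneg[OF bilinear] bilinear_rneg[OF bilinear]
  bilinear_lzero[OF bilinear] bilinear_rzero[OF bilinear]

lemma jordan_identity_linearized:
  "2 *\<^sub>R ((x \<cdot> z) \<cdot> y \<cdot> x) + (x \<cdot> x) \<cdot> y \<cdot> z
     = 2 *\<^sub>R ((x \<cdot> z) \<cdot> (y \<cdot> x)) + (x \<cdot> x) \<cdot> (y \<cdot> z)"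
proof -
  have "0 = ((x + z) \<cdot> (x + z)) \<cdot> y \<cdot> (x + z) - ((x + z) \<cdot> (x + z)) \<cdot> (y \<cdot> (x + z))
          - (((x - z) \<cdot> (x - z)) \<cdot> y \<cdot> (x - z) - ((x - z) \<cdot> (x - z)) \<cdot> (y \<cdot> (x - z)))
          - 2 *\<^sub>R ((z \<cdot> z) \<cdot> y \<cdot> z - (z \<cdot> z) \<cdot> (y \<cdot> z))"
    by (simp only: jordan_identity) simp
  also have "\<dots> = 2 *\<^sub>R (2 *\<^sub>R ((x \<cdot> z) \<cdot> y \<cdot> x) + (x \<cdot> x) \<cdot> y \<cdot> z
                        - (2 *\<^sub>R ((x \<cdot> z) \<cdot> (y \<cdot> x)) + (x \<cdot> x) \<cdot> (y \<cdot> z)))"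
    by (simp add: bilinear_simps commute[of z x] algebra_simps scaleR_2)
  finally show ?thesis
    by simp
qed

lemma jb_triple_same_outer: "jb_triple (\<cdot>) x y x = 2 *\<^sub>R (x \<cdot> (x \<cdot> y)) - (x \<cdot> x) \<cdot> y"
  by (simp add: jb_triple_def commute[of "x \<cdot> y" x] commute[of y x] scaleR_2)

end

locale formally_real_jordan_algebra = jordan_algebra +
  assumes formally_real: "x \<cdot> x + y \<cdot> y = 0 \<Longrightarrow> x = 0"
begin

lemma square_eq_0_iff: "x \<cdot> x = 0 \<longleftrightarrow> x = 0"
  using formally_real[of x 0] by (auto simp: bilinear_simps)

lemma square_eq_scaleR_square_imp_nonneg:
  assumes "x \<cdot> x = t *\<^sub>R (y \<cdot> y)" and "x \<noteq> 0"
  shows "0 \<le> t"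
proof (rule ccontr)
  assume "\<not> 0 \<le> t"
  then have "x \<cdot> x + (sqrt (- t) *\<^sub>R y) \<cdot> (sqrt (- t) *\<^sub>R y) = 0"
    using assms(1) by (simp add: bilinear_simps)
  with formally_real assms(2) show False
    by blast
qed

end

lemma jb_algebra_imp_formally_real:
  assumes "jb_algebra m"
  shows "formally_real_jordan_algebra m"
proof -
  have add: "m (x + y) z = m x z + m y z"
    and scale: "m (r *\<^sub>R x) y = r *\<^sub>R m x y"
    and comm: "m x y = m y x"
    and jordan: "m (m (m x x) y) x = m (m x x) (m y x)"
    and sq_norm: "norm (m x x) = (norm x)\<^sup>2"
    and sq_le: "norm (m x x) \<le> norm (m x x + m y y)" for x y z r
    using assms unfolding jb_algebra_def by blast+
  have left_linear: "linear (\<lambda>x. m x y)" for y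
    by (rule linearI) (simp_all add: add scale)
  moreover have "linear (\<lambda>y. m x y)" for x
    by (subst comm) (rule left_linear)
  ultimately have "jordan_algebra m"
    by unfold_locales (simp_all add: bilinear_def jordan, rule comm)
  moreover have "x = 0" if "m x x + m y y = 0" for x y
    using sq_le[of x y] sq_norm[of x] that by simp
  ultimately show ?thesis
    unfolding formally_real_jordan_algebra_def formally_real_jordan_algebra_axioms_def by blast
qed

locale projection_pair = jordan_algebra +
  fixes a b and lam mu :: real
  assumes idempotent_a: "a \<cdot> a = a" and idempotent_b: "b \<cdot> b = b"
    and nonzero_a: "a \<noteq> 0" and nonzero_b: "b \<noteq> 0"
    and triple_aba: "jb_triple (\<cdot>) a b a = lam *\<^sub>R a"
    and triple_bab: "jb_triple (\<cdot>) b a b = mu *\<^sub>R b"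
begin

lemma projection_pair_swap: "projection_pair (\<cdot>) b a mu lam"
  by unfold_locales (fact idempotent_b idempotent_a nonzero_b nonzero_a triple_bab triple_aba)+

lemma mult_a_ab: "a \<cdot> (a \<cdot> b) = (1/2) *\<^sub>R (a \<cdot> b + lam *\<^sub>R a)"
proof -
  have "2 *\<^sub>R (a \<cdot> (a \<cdot> b)) = a \<cdot> b + lam *\<^sub>R a"
    using triple_aba by (simp add: jb_triple_same_outer idempotent_a diff_eq_eq add.commute)
  then have "(1/2) *\<^sub>R (2 *\<^sub>R (a \<cdot> (a \<cdot> b))) = (1/2) *\<^sub>R (a \<cdot> b + lam *\<^sub>R a)"
    by (rule arg_cong)
  then show ?thesis
    by simp
qed

lemma lam_eq_0_if_orthogonal: "a \<cdot> b = 0 \<Longrightarrow> lam = 0"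
  using mult_a_ab nonzero_a by (simp add: bilinear_simps)

lemma mult_b_ab: "b \<cdot> (a \<cdot> b) = (1/2) *\<^sub>R (a \<cdot> b + mu *\<^sub>R b)"
  using projection_pair.mult_a_ab[OF projection_pair_swap] by (simp add: commute[of b a])

lemma square_ab:
  "(a \<cdot> b) \<cdot> (a \<cdot> b) = (mu/2) *\<^sub>R (a \<cdot> b) + (lam/4) *\<^sub>R a + (mu/4) *\<^sub>R b"
proof -
  have ba: "b \<cdot> a = a \<cdot> b"
    by (rule commute)
  have ab_a: "(a \<cdot> b) \<cdot> a = (1/2) *\<^sub>R (a \<cdot> b + lam *\<^sub>R a)"
    using mult_a_ab commute[of a "a \<cdot> b"] by simp
  have ab_b: "(a \<cdot> b) \<cdot> b = (1/2) *\<^sub>R (a \<cdot> b + mu *\<^sub>R b)"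
    using mult_b_ab commute[of b "a \<cdot> b"] by simp
  have "2 *\<^sub>R ((a \<cdot> b) \<cdot> b \<cdot> a) + (a \<cdot> b) \<cdot> b = 2 *\<^sub>R ((a \<cdot> b) \<cdot> (a \<cdot> b)) + a \<cdot> b"
    using jordan_identity_linearized[of a b b] by (simp add: idempotent_a idempotent_b ba)
  then have "2 *\<^sub>R ((a \<cdot> b) \<cdot> (a \<cdot> b)) = 2 *\<^sub>R ((a \<cdot> b) \<cdot> b \<cdot> a) + (a \<cdot> b) \<cdot> b - a \<cdot> b"
    by (simp add: algebra_simps)
  also have "\<dots> = 2 *\<^sub>R ((mu/2) *\<^sub>R (a \<cdot> b) + (lam/4) *\<^sub>R a + (mu/4) *\<^sub>R b)"
    by (simp add: ab_a ab_b bilinear_simps ba algebra_simps scaleR_half_add_half)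
  finally show ?thesis
    by simp
qed

lemma lam_eq_mu: "lam = mu"
proof (cases "a \<cdot> b = 0")
  case True
  then show ?thesis
    using lam_eq_0_if_orthogonal projection_pair.lam_eq_0_if_orthogonal[OF projection_pair_swap]
    by (simp add: commute[of b a])
next
  case False
  have "(mu/2) *\<^sub>R (a \<cdot> b) + (lam/4) *\<^sub>R a + (mu/4) *\<^sub>R b
      = (lam/2) *\<^sub>R (a \<cdot> b) + (mu/4) *\<^sub>R b + (lam/4) *\<^sub>R a"
    using square_ab projection_pair.square_ab[OF projection_pair_swap]
    by (simp add: commute[of b a])
  then have "(mu/2) *\<^sub>R (a \<cdot> b) = (lam/2) *\<^sub>R (a \<cdot> b)"
    by (simp add: algebra_simps)
  with False show ?thesis
    by simp
qed

lemma lam_eq_1_if_eq: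
  assumes "a = b"
  shows "lam = 1"
proof -
  have "1 *\<^sub>R a = (1/2 + lam/2) *\<^sub>R a"
    using mult_a_ab by (simp add: assms idempotent_b algebra_simps)
  then have "1 = 1/2 + lam/2"
    using nonzero_a scaleR_cancel_right by blast
  then show ?thesis
    by simp
qed

lemma square_sum: "(a + b) \<cdot> (a + b) = a + b + 2 *\<^sub>R (a \<cdot> b)"
  by (simp add: bilinear_simps idempotent_a idempotent_b commute[of b a] scaleR_2)

lemma square_diff: "(a - b) \<cdot> (a - b) = a + b - 2 *\<^sub>R (a \<cdot> b)"
  by (simp add: bilinear_simps idempotent_a idempotent_b commute[of b a] scaleR_2)

lemma square_ab_eq_square_sum: "(a \<cdot> b) \<cdot> (a \<cdot> b) = (lam/4) *\<^sub>R ((a + b) \<cdot> (a + b))"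
  unfolding square_ab square_sum lam_eq_mu by (simp add: algebra_simps)

lemma square_square_diff:
  "((a - b) \<cdot> (a - b)) \<cdot> ((a - b) \<cdot> (a - b)) = (1 - lam) *\<^sub>R ((a - b) \<cdot> (a - b))"
proof -
  define q where "q = a + b - 2 *\<^sub>R (a \<cdot> b)"
  have q_a: "q \<cdot> a = (1 - lam) *\<^sub>R a"
    by (simp add: q_def bilinear_simps idempotent_a commute[of b a] commute[of "a \<cdot> b" a]
        mult_a_ab algebra_simps)
  have q_b: "q \<cdot> b = (1 - lam) *\<^sub>R b"
    by (simp add: q_def bilinear_simps idempotent_b commute[of "a \<cdot> b" b] mult_b_ab lam_eq_mu
        algebra_simps)
  have q_ab: "q \<cdot> (a \<cdot> b) = (1 - lam) *\<^sub>R (a \<cdot> b)"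
    by (simp add: q_def bilinear_simps commute[of b a] mult_a_ab mult_b_ab square_ab lam_eq_mu
        algebra_simps scaleR_half_add_half)
  have "q \<cdot> q = q \<cdot> a + q \<cdot> b - 2 *\<^sub>R (q \<cdot> (a \<cdot> b))"
    by (subst (2) q_def) (simp add: bilinear_simps)
  also have "\<dots> = (1 - lam) *\<^sub>R q"
    by (simp only: q_a q_b q_ab) (simp add: q_def algebra_simps)
  finally show ?thesis
    unfolding square_diff q_def .
qed

end

locale formally_real_projection_pair =
  projection_pair mult a b lam mu + formally_real_jordan_algebra mult
  for mult :: "'a::real_vector \<Rightarrow> 'a \<Rightarrow> 'a"  (infixl "\<cdot>" 70) and a b lam mu
begin

lemma lam_nonneg: "0 \<le> lam"
proof (cases "a \<cdot> b = 0")
  case True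
  then show ?thesis
    by (simp add: lam_eq_0_if_orthogonal)
next
  case False
  with square_ab_eq_square_sum have "0 \<le> lam / 4"
    by (rule square_eq_scaleR_square_imp_nonneg)
  then show ?thesis
    by simp
qed

lemma lam_eq_0_iff: "lam = 0 \<longleftrightarrow> a \<cdot> b = 0"
  using square_ab_eq_square_sum lam_eq_0_if_orthogonal by (auto simp: square_eq_0_iff)

lemma lam_le_1: "lam \<le> 1"
proof (cases "(a - b) \<cdot> (a - b) = 0")
  case True
  then show ?thesis
    by (simp add: square_eq_0_iff lam_eq_1_if_eq)
next
  case False
  with square_square_diff have "0 \<le> 1 - lam"
    by (rule square_eq_scaleR_square_imp_nonneg)
  then show ?thesis
    by simp
qed

lemma lam_eq_1_iff: "lam = 1 \<longleftrightarrow> a = b"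
  using square_square_diff lam_eq_1_if_eq by (auto simp: square_eq_0_iff)

end

theorem proposition3p1:
  fixes m :: "'a::banach \<Rightarrow> 'a \<Rightarrow> 'a" and a b :: 'a and lam mu :: real
  assumes "jb_algebra m"
    and "jb_projection m a" and "jb_projection m b"
    and "a \<noteq> 0" and "b \<noteq> 0"
    and "jb_triple m a b a = lam *\<^sub>R a"
    and "jb_triple m b a b = mu *\<^sub>R b"
  shows "0 \<le> lam \<and> lam = mu \<and> mu \<le> 1
         \<and> (lam = 0 \<longleftrightarrow> m a b = 0)
         \<and> (lam = 1 \<longleftrightarrow> a = b)"
proof -
  interpret formally_real_jordan_algebra m
    using assms(1) by (rule jb_algebra_imp_formally_real)
  interpret formally_real_projection_pair m a b lam mu
    using assms(2-7) by unfold_locales (simp_all add: jb_projection_def)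
  show ?thesis
    using lam_nonneg lam_eq_mu lam_le_1 lam_eq_0_iff lam_eq_1_iff by simp
qed

end
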